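(* Let $K$ be a field. For every valuation $\nu$ on $K[x]$ there exists a set $\mathbf{Q}\subseteq K[x]$ of key polynomials for $\nu$ which satisfies (GS1$^*$). Moreover, $\mathbf{Q}$ can be chosen so that distinct elements of $\mathbf{Q}$ have distinct values of $\epsilon$ and $\mathbf{Q}$ is well-ordered by the order $Q<Q'$ iff $\epsilon(Q)<\epsilon(Q')$.
   Context: $\nu:K[x]\to\Gamma\cup\{\infty\}$ is a valuation ($\Gamma$ an ordered abelian group) with $\nu(f)=\infty$ only for $f=0$; $\Gamma'=\Gamma\otimes\mathbb{Q}$. For $k\in\mathbb{N}$, $\partial_kf=\frac{1}{k!}\frac{d^kf}{dx^k}$. For nonconstant $f$, $\epsilon(f)=\max\{(\nu(f)-\nu(\partial_kf))/k\mid 1\le k\le\deg f,\ \partial_kf\ne0\}\in\Gamma'$. A key polynomial is a monic nonconstant $Q\in K[x]$ such that every nonconstant $f\in K[x]$ with $\epsilon(f)\ge\epsilon(Q)$ satisfies $\deg f\ge\deg Q$. For finitely supported $\lambda:\mathbf{Q}\to\mathbb{N}_0$ let $\mathbf{Q}^\lambda=\prod_{\lambda(Q)\neq0}Q^{\lambda(Q)}$. (GS1$^*$): for every $f\in K[x]$ there exist $r\ge0$, $a_1,\dots,a_r\in K$ and finitely supported $\lambda_1,\dots,\lambda_r:\mathbf{Q}\to\mathbb{N}_0$ with $f=\sum_{i=1}^ra_i\mathbf{Q}^{\lambda_i}$, $\nu(a_i\mathbf{Q}^{\lambda_i})\ge\nu(f)$ for all $i$, and $\deg Q\le\deg f$ whenever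 $\lambda_i(Q)\ne0$ for some $i$. *)

theory Defs
  imports "HOL-Computational_Algebra.Polynomial"
begin

text \<open>We record
  only the finite values: \<open>\<nu> f\<close> is meaningful for \<open>f \<noteq> 0\<close>, and \<open>\<nu> 0 = \<infinity>\<close>
  is handled by the convention encoded in \<open>val_ge\<close>.\<close>

definition is_valuation :: "('a::field poly \<Rightarrow> 'g::linordered_ab_group_add) \<Rightarrow> bool" where
  "is_valuation \<nu> \<longleftrightarrow>
     (\<forall>f g. f \<noteq> 0 \<longrightarrow> g \<noteq> 0 \<longrightarrow> \<nu> (f * g) = \<nu> f + \<nu> g) \<and>
     (\<forall>f g. f \<noteq> 0 \<longrightarrow> g \<noteq> 0 \<longrightarrow> f + g \<noteq> 0 \<longrightarrow> min (\<nu> f) (\<nu> g) \<le> \<nu> (f + g))"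

text \<open>\<open>val_ge \<nu> g f\<close> means \<open>\<nu>(g) \<ge> \<nu>(f)\<close> in \<open>\<Gamma> \<union> {\<infinity>}\<close>, with \<open>\<nu>(0) = \<infinity>\<close>.\<close>
definition val_ge :: "('a::field poly \<Rightarrow> 'g::linordered_ab_group_add) \<Rightarrow> 'a poly \<Rightarrow> 'a poly \<Rightarrow> bool" where
  "val_ge \<nu> g f \<longleftrightarrow> g = 0 \<or> (f \<noteq> 0 \<and> \<nu> f \<le> \<nu> g)"

text \<open>Hasse derivative \<open>\<partial>\<^sub>k\<close> (equals \<open>(1/k!) d\<^sup>k/dx\<^sup>k\<close> in characteristic 0):
  \<open>\<partial>\<^sub>k x\<^sup>i = (i choose k) x\<^sup>i\<^sup>-\<^sup>k\<close>.\<close>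
definition hasse :: "nat \<Rightarrow> 'a::field poly \<Rightarrow> 'a poly" where
  "hasse k f = (\<Sum>i\<le>degree f. monom (of_nat (i choose k) * coeff f i) (i - k))"

definition nsm :: "nat \<Rightarrow> 'g::ab_group_add \<Rightarrow> 'g" where
  "nsm n a = (\<Sum>i<n. a)"

text \<open>Elements of \<open>\<Gamma>' = \<Gamma> \<otimes> \<rat>\<close> are represented as formal quotients \<open>a/m\<close>
  (pairs \<open>(a, m)\<close>, \<open>m > 0\<close>); \<open>a/m \<le> b/n\<close> iff \<open>n a \<le> m b\<close> in \<open>\<Gamma>\<close>.\<close>
definition frac_le :: "'g::linordered_ab_group_add \<times> nat \<Rightarrow> 'g \<times> nat \<Rightarrow> bool" where
  "frac_le p q \<longleftrightarrow> nsm (snd q) (fst p) \<le> nsm (snd p) (fst q)"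

text \<open>The candidates \<open>(\<nu>(f) - \<nu>(\<partial>\<^sub>kf))/k\<close>, \<open>1 \<le> k \<le> deg f\<close>, \<open>\<partial>\<^sub>kf \<noteq> 0\<close>; \<open>\<epsilon>(f)\<close> is their maximum.\<close>
definition eps_cands :: "('a::field poly \<Rightarrow> 'g::linordered_ab_group_add) \<Rightarrow> 'a poly \<Rightarrow> ('g \<times> nat) set" where
  "eps_cands \<nu> f = {(\<nu> f - \<nu> (hasse k f), k) | k. 1 \<le> k \<and> k \<le> degree f \<and> hasse k f \<noteq> 0}"

text \<open>\<open>eps_le \<nu> f g\<close> means \<open>\<epsilon>(f) \<le> \<epsilon>(g)\<close>, i.e. max of the candidates of f \<open>\<le>\<close> max of those of g.\<close>
definition eps_le :: "('a::field poly \<Rightarrow> 'g::linordered_ab_group_add) \<Rightarrow> 'a poly \<Rightarrow> 'a poly \<Rightarrow> bool" where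
  "eps_le \<nu> f g \<longleftrightarrow> (\<forall>p\<in>eps_cands \<nu> f. \<exists>q\<in>eps_cands \<nu> g. frac_le p q)"

definition eps_lt :: "('a::field poly \<Rightarrow> 'g::linordered_ab_group_add) \<Rightarrow> 'a poly \<Rightarrow> 'a poly \<Rightarrow> bool" where
  "eps_lt \<nu> f g \<longleftrightarrow> eps_le \<nu> f g \<and> \<not> eps_le \<nu> g f"

definition key_poly :: "('a::field poly \<Rightarrow> 'g::linordered_ab_group_add) \<Rightarrow> 'a poly \<Rightarrow> bool" where
  "key_poly \<nu> Q \<longleftrightarrow> lead_coeff Q = 1 \<and> degree Q \<ge> 1 \<and>
     (\<forall>f. degree f \<ge> 1 \<longrightarrow> eps_le \<nu> Q f \<longrightarrow> degree f \<ge> degree Q)"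

definition Qpow :: "('a::field poly \<Rightarrow> nat) \<Rightarrow> 'a poly" where
  "Qpow lam = (\<Prod>Q\<in>{Q. lam Q \<noteq> 0}. Q ^ lam Q)"

definition fin_exp :: "'a::field poly set \<Rightarrow> ('a poly \<Rightarrow> nat) \<Rightarrow> bool" where
  "fin_exp Qs lam \<longleftrightarrow> finite {Q. lam Q \<noteq> 0} \<and> {Q. lam Q \<noteq> 0} \<subseteq> Qs"

definition GS1_star :: "('a::field poly \<Rightarrow> 'g::linordered_ab_group_add) \<Rightarrow> 'a poly set \<Rightarrow> bool" where
  "GS1_star \<nu> Qs \<longleftrightarrow>
     (\<forall>f::'a poly. \<exists>(r::nat) (a::nat \<Rightarrow> 'a) (lam::nat \<Rightarrow> 'a poly \<Rightarrow> nat).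
        (\<forall>i<r. fin_exp Qs (lam i)) \<and>
        f = (\<Sum>i<r. smult (a i) (Qpow (lam i))) \<and>
        (\<forall>i<r. val_ge \<nu> (smult (a i) (Qpow (lam i))) f) \<and>
        (\<forall>i<r. \<forall>Q. lam i Q \<noteq> 0 \<longrightarrow> degree Q \<le> degree f))"

end

theory Submission
  imports Defs
begin

text \<open>Fix a well-order of \<open>K[x]\<close> and keep a key polynomial only if every smaller key
  polynomial of the same degree has strictly smaller \<open>\<epsilon>\<close>. Every key polynomial is then
  \<open>\<epsilon>\<close>-dominated by a kept one of the same degree, and since \<open>\<epsilon>(Q) \<le> \<epsilon>(Q')\<close> forces
  \<open>deg Q \<le> deg Q'\<close> between key polynomials, \<open>\<epsilon>\<close> is injective and well-founded on the kept set
  (compare by degree, then by the well-order).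

  For (GS1\<open>\<^sup>*\<close>), take \<open>f\<close>, a key polynomial \<open>Q\<close> of minimal degree with \<open>\<epsilon>(f) \<le> \<epsilon>(Q)\<close> and a
  kept \<open>R\<close> of the same degree with \<open>\<epsilon>(Q) \<le> \<epsilon>(R)\<close>. In the \<open>R\<close>-adic expansion
  \<open>f = \<Sum> c\<^sub>i R\<^sup>i\<close> every term has value at least \<open>\<nu>(f)\<close>: otherwise let \<open>t\<close> be the largest index
  of a term of minimal value \<open>\<mu> < \<nu>(f)\<close> and \<open>b\<close> the largest index realising
  \<open>\<epsilon>(R) = (\<nu>(R) - \<nu>(\<partial>\<^sub>bR))/b\<close>; the Leibniz rule shows that \<open>\<partial>\<^sub>b\<^sub>tf\<close> is dominated by
  \<open>c\<^sub>t(\<partial>\<^sub>bR)\<^sup>t\<close>, of value \<open>\<mu> - bt\<epsilon>(R)\<close>, whence \<open>\<epsilon>(f) > \<epsilon>(R)\<close>. So \<open>f = (f div R) R + f mod R\<close>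
  with both summands of value \<open>\<ge> \<nu>(f)\<close>, and induction on the degree finishes the proof.\<close>

lemma nsm_0 [simp]: "nsm 0 a = 0"
  by (simp add: nsm_def)

lemma nsm_Suc: "nsm (Suc n) a = a + nsm n a"
  by (simp add: nsm_def add.commute)

lemma nsm_zero [simp]: "nsm n 0 = 0"
  by (simp add: nsm_def)

lemma nsm_add_left: "nsm (m + n) a = nsm m a + nsm n a"
  by (induct m) (simp_all add: nsm_Suc add.assoc)

lemma nsm_add_right: "nsm n (a + b) = nsm n a + nsm n (b::'g::ab_group_add)"
  by (induct n) (simp_all add: nsm_Suc algebra_simps)

lemma nsm_minus: "nsm n (- a) = - nsm n (a::'g::ab_group_add)"
  by (induct n) (simp_all add: nsm_Suc algebra_simps)

lemma nsm_diff: "nsm n (a - b) = nsm n a - nsm n (b::'g::ab_group_add)"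
  using nsm_add_right[of n a "- b"] nsm_minus[of n b] by simp

lemma nsm_mult: "nsm m (nsm n a) = nsm (m * n) a"
  by (induct m) (simp_all add: nsm_Suc nsm_add_left)

lemma nsm_mono: "a \<le> b \<Longrightarrow> nsm n a \<le> nsm n (b::'g::ordered_ab_group_add)"
  by (induct n) (simp_all add: nsm_Suc add_mono)

lemma nsm_strict_mono: "0 < n \<Longrightarrow> a < b \<Longrightarrow> nsm n a < nsm n (b::'g::ordered_ab_group_add)"
proof (induct n)
  case (Suc n)
  then show ?case
    by (cases n) (auto simp: nsm_Suc intro: add_less_le_mono nsm_mono)
qed simp

lemma nsm_le_cancel: "0 < n \<Longrightarrow> nsm n a \<le> nsm n b \<Longrightarrow> a \<le> (b::'g::linordered_ab_group_add)"
  using nsm_strict_mono[of n b a] by (meson not_le)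

lemma nsm_less_cancel: "nsm n a < nsm n b \<Longrightarrow> a < (b::'g::linordered_ab_group_add)"
  using nsm_mono[of b a n] by (meson not_le)

section \<open>Hasse derivatives\<close>

lemma coeff_hasse: "coeff (hasse k f) n = of_nat ((n + k) choose k) * coeff f (n + k)"
proof -
  have "coeff (hasse k f) n =
      (\<Sum>i\<le>degree f. if i = n + k then of_nat ((n + k) choose k) * coeff f (n + k) else 0)"
    unfolding hasse_def coeff_sum coeff_monom
  proof (intro sum.cong refl)
    fix i
    \<comment> \<open>for \<open>i < k\<close> the truncated exponent \<open>i - k = 0\<close> is harmless since \<open>i choose k = 0\<close>\<close>
    show "(if i - k = n then of_nat (i choose k) * coeff f i else 0) =
        (if i = n + k then of_nat ((n + k) choose k) * coeff f (n + k) else 0)"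
      by (cases "i < k") (auto simp: binomial_eq_0)
  qed
  also have "\<dots> = of_nat ((n + k) choose k) * coeff f (n + k)"
    by (auto simp: coeff_eq_0)
  finally show ?thesis .
qed

lemma hasse_0 [simp]: "hasse 0 f = f"
  by (simp add: poly_eq_iff coeff_hasse)

lemma hasse_zero [simp]: "hasse k 0 = 0"
  by (simp add: poly_eq_iff coeff_hasse)

lemma hasse_add: "hasse k (f + g) = hasse k f + hasse k g"
  by (simp add: poly_eq_iff coeff_hasse algebra_simps)

lemma hasse_smult: "hasse k (smult c f) = smult c (hasse k f)"
  by (simp add: poly_eq_iff coeff_hasse algebra_simps)

lemma hasse_sum: "hasse k (\<Sum>i\<in>A. f i) = (\<Sum>i\<in>A. hasse k (f i))"
  by (induct A rule: infinite_finite_induct) (simp_all add: hasse_add)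

lemma hasse_eq_0_if_degree_less: "degree f < k \<Longrightarrow> hasse k f = 0"
  by (simp add: poly_eq_iff coeff_hasse coeff_eq_0)

lemma le_degree_if_hasse_nonzero: "hasse k f \<noteq> 0 \<Longrightarrow> k \<le> degree f"
  using hasse_eq_0_if_degree_less[of f k] by linarith

lemma hasse_degree: "hasse (degree f) f = [:lead_coeff f:]"
  by (auto simp: poly_eq_iff coeff_hasse coeff_eq_0 coeff_pCons split: nat.split)

lemma hasse_1: "hasse k 1 = (if k = 0 then 1 else 0)"
  by (auto simp: poly_eq_iff coeff_hasse coeff_eq_0 coeff_pCons split: nat.split)

lemma hasse_pCons_0:
  "hasse k (pCons 0 p) = pCons 0 (hasse k p) + (if k = 0 then 0 else hasse (k - 1) p)"
proof (rule poly_eqI)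
  fix n
  show "coeff (hasse k (pCons 0 p)) n =
      coeff (pCons 0 (hasse k p) + (if k = 0 then 0 else hasse (k - 1) p)) n"
    by (cases k; cases n) (simp_all add: coeff_hasse coeff_pCons algebra_simps)
qed

lemma pCons_0_sum: "pCons 0 (\<Sum>i\<in>A. f i) = (\<Sum>i\<in>A. pCons 0 (f i))"
  by (induct A rule: infinite_finite_induct) (simp_all, metis add_pCons add_0)

lemma hasse_mult: "hasse k (f * g) = (\<Sum>j\<le>k. hasse j f * hasse (k - j) g)"
proof (induct f arbitrary: k rule: pCons_induct)
  case 0
  then show ?case by simp
next
  case (pCons a p)
  have hasse_pCons: "hasse j (pCons a p) =
      (if j = 0 then [:a:] else 0) + pCons 0 (hasse j p) + (if j = 0 then 0 else hasse (j - 1) p)" for j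
  proof -
    have "pCons a p = [:a:] + pCons 0 p" by simp
    then show ?thesis
      by (simp only: hasse_add hasse_pCons_0) (auto simp: hasse_eq_0_if_degree_less)
  qed
  have "(\<Sum>j\<le>k. hasse j (pCons a p) * hasse (k - j) g) =
     (\<Sum>j\<le>k. (if j = 0 then [:a:] else 0) * hasse (k - j) g)
      + (\<Sum>j\<le>k. pCons 0 (hasse j p * hasse (k - j) g))
      + (\<Sum>j\<le>k. (if j = 0 then 0 else hasse (j - 1) p) * hasse (k - j) g)"
    unfolding hasse_pCons by (simp add: sum.distrib distrib_right)
  also have "(\<Sum>j\<le>k. (if j = 0 then [:a:] else 0) * hasse (k - j) g) = smult a (hasse k g)"
    by (simp add: if_distrib[of "\<lambda>x. x * _"] sum.delta cong: if_cong)
  also have "(\<Sum>j\<le>k. pCons 0 (hasse j p * hasse (k - j) g)) = pCons 0 (hasse k (p * g))"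
    by (simp add: pCons.hyps(2) pCons_0_sum)
  also have "(\<Sum>j\<le>k. (if j = 0 then 0 else hasse (j - 1) p) * hasse (k - j) g) =
      (if k = 0 then 0 else hasse (k - 1) (p * g))"
    by (cases k) (simp_all add: pCons.hyps(2) sum.atMost_Suc_shift del: sum.atMost_Suc)
  finally show ?case by (simp add: hasse_add hasse_pCons_0 hasse_smult)
qed

section \<open>Valuations\<close>

text \<open>\<open>scaled_val_ge \<nu> b c T x\<close> says \<open>\<nu>(x) \<ge> (T - c)/b\<close> in \<open>\<Gamma>'\<close> (vacuously for \<open>x = 0\<close>), with
  the denominator cleared so that the statement lives in \<open>\<Gamma>\<close>.\<close>

definition scaled_val_ge ::
    "('a::field poly \<Rightarrow> 'g::linordered_ab_group_add) \<Rightarrow> nat \<Rightarrow> 'g \<Rightarrow> 'g \<Rightarrow> 'a poly \<Rightarrow> bool" where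
  "scaled_val_ge \<nu> b c T x \<longleftrightarrow> x = 0 \<or> T \<le> nsm b (\<nu> x) + c"

definition scaled_val_gt ::
    "('a::field poly \<Rightarrow> 'g::linordered_ab_group_add) \<Rightarrow> nat \<Rightarrow> 'g \<Rightarrow> 'g \<Rightarrow> 'a poly \<Rightarrow> bool" where
  "scaled_val_gt \<nu> b c T x \<longleftrightarrow> x = 0 \<or> T < nsm b (\<nu> x) + c"

lemma scaled_val_ge_0 [simp]: "scaled_val_ge \<nu> b c T 0"
  and scaled_val_gt_0 [simp]: "scaled_val_gt \<nu> b c T 0"
  by (simp_all add: scaled_val_ge_def scaled_val_gt_def)

lemma scaled_val_ge_self: "scaled_val_ge \<nu> b 0 (nsm b (\<nu> x)) x"
  by (simp add: scaled_val_ge_def)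

lemma scaled_val_gt_imp_ge: "scaled_val_gt \<nu> b c T x \<Longrightarrow> scaled_val_ge \<nu> b c T x"
  unfolding scaled_val_ge_def scaled_val_gt_def by auto

lemma scaled_val_ge_gt_trans: "scaled_val_ge \<nu> b c T' x \<Longrightarrow> T < T' \<Longrightarrow> scaled_val_gt \<nu> b c T x"
  unfolding scaled_val_ge_def scaled_val_gt_def by auto

lemma scaled_val_gt_trans: "scaled_val_gt \<nu> b c T' x \<Longrightarrow> T \<le> T' \<Longrightarrow> scaled_val_gt \<nu> b c T x"
  unfolding scaled_val_gt_def by auto

lemma val_ge_refl: "val_ge \<nu> x x"
  by (simp add: val_ge_def)

context
  fixes \<nu> :: "'a::field poly \<Rightarrow> 'g::linordered_ab_group_add"
  assumes val: "is_valuation \<nu>"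
begin

lemma val_mult: "f \<noteq> 0 \<Longrightarrow> g \<noteq> 0 \<Longrightarrow> \<nu> (f * g) = \<nu> f + \<nu> g"
  using val by (simp add: is_valuation_def)

lemma val_add_ge_min: "f \<noteq> 0 \<Longrightarrow> g \<noteq> 0 \<Longrightarrow> f + g \<noteq> 0 \<Longrightarrow> min (\<nu> f) (\<nu> g) \<le> \<nu> (f + g)"
  using val by (simp add: is_valuation_def)

lemma val_1: "\<nu> 1 = 0"
  using val_mult[of 1 1] by simp

lemma val_minus_1: "\<nu> (- 1) = 0"
proof -
  have "\<nu> (- 1) + \<nu> (- 1) = 0"
    using val_mult[of "- 1" "- 1"] val_1 by simp
  then show ?thesis
    by (metis add_neg_neg add_pos_pos less_irrefl linorder_neqE)
qed

lemma val_uminus: "f \<noteq> 0 \<Longrightarrow> \<nu> (- f) = \<nu> f"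
  using val_mult[of "- 1" f] val_minus_1 by simp

lemma val_power: "f \<noteq> 0 \<Longrightarrow> \<nu> (f ^ n) = nsm n (\<nu> f)"
  by (induct n) (simp_all add: val_1 val_mult nsm_Suc)

lemma val_smult: "c \<noteq> 0 \<Longrightarrow> f \<noteq> 0 \<Longrightarrow> \<nu> (smult c f) = \<nu> [:c:] + \<nu> f"
  using val_mult[of "[:c:]" f] by simp

lemma val_add_eq_if_less:
  assumes "x \<noteq> 0" and "y = 0 \<or> \<nu> x < \<nu> y"
  shows "x + y \<noteq> 0 \<and> \<nu> (x + y) = \<nu> x"
proof (cases "y = 0")
  case False
  with assms have less: "\<nu> x < \<nu> y" by auto
  have sum_nonzero: "x + y \<noteq> 0"
  proof
    assume "x + y = 0"
    then have "y = - x" by (metis add.commute neg_eq_iff_add_eq_0)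
    with less assms show False by (simp add: val_uminus)
  qed
  have "min (\<nu> x) (\<nu> y) \<le> \<nu> (x + y)"
    using False assms sum_nonzero by (intro val_add_ge_min) auto
  then have ge: "\<nu> x \<le> \<nu> (x + y)" using less by simp
  have "min (\<nu> (x + y)) (\<nu> (- y)) \<le> \<nu> ((x + y) + (- y))"
    using False assms sum_nonzero by (intro val_add_ge_min) auto
  then have "min (\<nu> (x + y)) (\<nu> y) \<le> \<nu> x" using False by (simp add: val_uminus)
  with less ge have "\<nu> (x + y) \<le> \<nu> x" by (simp add: min_def split: if_splits)
  with ge sum_nonzero show ?thesis by simp
qed (use assms in simp)

lemma val_add_ge_either:
  assumes "x \<noteq> 0" "y \<noteq> 0" "x + y \<noteq> 0"
  shows "\<nu> x \<le> \<nu> (x + y) \<or> \<nu> y \<le> \<nu> (x + y)"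
  using val_add_ge_min[OF assms] by (simp add: min_le_iff_disj)

lemma val_ge_add:
  assumes "val_ge \<nu> x T" "val_ge \<nu> y T"
  shows "val_ge \<nu> (x + y) T"
proof (cases "x = 0 \<or> y = 0 \<or> x + y = 0")
  case False
  then show ?thesis
    using val_add_ge_either[of x y] assms unfolding val_ge_def by auto
qed (use assms in \<open>auto simp: val_ge_def\<close>)

lemma val_ge_sum: "(\<And>i. i \<in> A \<Longrightarrow> val_ge \<nu> (f i) T) \<Longrightarrow> val_ge \<nu> (\<Sum>i\<in>A. f i) T"
  by (induct A rule: infinite_finite_induct) (auto simp: val_ge_add, simp_all add: val_ge_def)

lemma val_ge_mult_right: "R \<noteq> 0 \<Longrightarrow> val_ge \<nu> x y \<Longrightarrow> val_ge \<nu> (x * R) (y * R)"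
  unfolding val_ge_def by (auto simp: val_mult)

lemma nsm_val_add_ge_either:
  assumes "x \<noteq> 0" "y \<noteq> 0" "x + y \<noteq> 0"
  shows "nsm b (\<nu> x) \<le> nsm b (\<nu> (x + y)) \<or> nsm b (\<nu> y) \<le> nsm b (\<nu> (x + y))"
  using val_add_ge_either[OF assms] nsm_mono by blast

lemma scaled_val_ge_add:
  assumes "scaled_val_ge \<nu> b c T x" "scaled_val_ge \<nu> b c T y"
  shows "scaled_val_ge \<nu> b c T (x + y)"
proof (cases "x = 0 \<or> y = 0 \<or> x + y = 0")
  case False
  then show ?thesis
    using nsm_val_add_ge_either[of x y b] assms unfolding scaled_val_ge_def
    by (metis add_le_cancel_right order_trans)
qed (use assms in auto)

lemma scaled_val_gt_add:
  assumes "scaled_val_gt \<nu> b c T x" "scaled_val_gt \<nu> b c T y"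
  shows "scaled_val_gt \<nu> b c T (x + y)"
proof (cases "x = 0 \<or> y = 0 \<or> x + y = 0")
  case False
  then show ?thesis
    using nsm_val_add_ge_either[of x y b] assms unfolding scaled_val_gt_def
    by (metis add_le_cancel_right order_less_le_trans)
qed (use assms in auto)

lemma scaled_val_ge_sum:
  "(\<And>i. i \<in> A \<Longrightarrow> scaled_val_ge \<nu> b c T (f i)) \<Longrightarrow> scaled_val_ge \<nu> b c T (\<Sum>i\<in>A. f i)"
  by (induct A rule: infinite_finite_induct) (auto intro: scaled_val_ge_add)

lemma scaled_val_gt_sum:
  "(\<And>i. i \<in> A \<Longrightarrow> scaled_val_gt \<nu> b c T (f i)) \<Longrightarrow> scaled_val_gt \<nu> b c T (\<Sum>i\<in>A. f i)"
  by (induct A rule: infinite_finite_induct) (auto intro: scaled_val_gt_add)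

lemma nsm_val_mult: "x \<noteq> 0 \<Longrightarrow> y \<noteq> 0 \<Longrightarrow> nsm b (\<nu> (x * y)) = nsm b (\<nu> x) + nsm b (\<nu> y)"
  by (simp add: val_mult nsm_add_right)

lemma scaled_val_ge_mult:
  assumes "scaled_val_ge \<nu> b c1 T1 x" "scaled_val_ge \<nu> b c2 T2 y" "c = c1 + c2" "T = T1 + T2"
  shows "scaled_val_ge \<nu> b c T (x * y)"
proof (cases "x = 0 \<or> y = 0")
  case False
  then have "T1 + T2 \<le> (nsm b (\<nu> x) + c1) + (nsm b (\<nu> y) + c2)"
    using assms by (intro add_mono) (auto simp: scaled_val_ge_def)
  with False assms(3,4) show ?thesis
    by (simp add: scaled_val_ge_def nsm_val_mult ac_simps)
qed auto

lemma scaled_val_gt_mult_left: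
  assumes "scaled_val_gt \<nu> b c1 T1 x" "scaled_val_ge \<nu> b c2 T2 y" "c = c1 + c2" "T = T1 + T2"
  shows "scaled_val_gt \<nu> b c T (x * y)"
proof (cases "x = 0 \<or> y = 0")
  case False
  then have "T1 + T2 < (nsm b (\<nu> x) + c1) + (nsm b (\<nu> y) + c2)"
    using assms by (intro add_less_le_mono) (auto simp: scaled_val_ge_def scaled_val_gt_def)
  with False assms(3,4) show ?thesis
    by (simp add: scaled_val_gt_def nsm_val_mult ac_simps)
qed auto

lemma scaled_val_gt_mult_right:
  assumes "scaled_val_ge \<nu> b c1 T1 x" "scaled_val_gt \<nu> b c2 T2 y" "c = c1 + c2" "T = T1 + T2"
  shows "scaled_val_gt \<nu> b c T (x * y)"
  using scaled_val_gt_mult_left[OF assms(2,1)] assms(3,4) by (simp add: ac_simps)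

end

section \<open>The comparison of \<open>\<epsilon>\<close>-values\<close>

lemma frac_le_refl: "frac_le p p"
  by (simp add: frac_le_def)

lemma frac_le_total: "frac_le p q \<or> frac_le q p"
  by (auto simp: frac_le_def)

lemma frac_le_trans:
  assumes "0 < snd q" "frac_le p q" "frac_le q r"
  shows "frac_le p r"
proof -
  obtain a m a' m' a'' m'' where pqr: "p = (a, m)" "q = (a', m')" "r = (a'', m'')"
    by (cases p, cases q, cases r)
  from assms pqr have pq: "nsm m' a \<le> nsm m a'" and qr: "nsm m'' a' \<le> nsm m' a''" and "0 < m'"
    by (auto simp: frac_le_def)
  have "nsm m' (nsm m'' a) = nsm m'' (nsm m' a)" by (simp add: nsm_mult mult.commute)
  also have "\<dots> \<le> nsm m'' (nsm m a')" using pq by (rule nsm_mono)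
  also have "\<dots> = nsm m (nsm m'' a')" by (simp add: nsm_mult mult.commute)
  also have "\<dots> \<le> nsm m (nsm m' a'')" using qr by (rule nsm_mono)
  also have "\<dots> = nsm m' (nsm m a'')" by (simp add: nsm_mult mult.commute)
  finally have "nsm m'' a \<le> nsm m a''" using \<open>0 < m'\<close> by (rule nsm_le_cancel[rotated])
  then show ?thesis using pqr by (simp add: frac_le_def)
qed

lemma snd_eps_cands_pos: "q \<in> eps_cands \<nu> f \<Longrightarrow> 0 < snd q"
  by (auto simp: eps_cands_def)

lemma eps_le_refl: "eps_le \<nu> f f"
  by (auto simp: eps_le_def intro: frac_le_refl)

lemma eps_le_trans:
  assumes "eps_le \<nu> f g" "eps_le \<nu> g h"
  shows "eps_le \<nu> f h"
  unfolding eps_le_def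
proof
  fix p assume "p \<in> eps_cands \<nu> f"
  then obtain q where q: "q \<in> eps_cands \<nu> g" "frac_le p q"
    using assms(1) unfolding eps_le_def by blast
  then obtain r where "r \<in> eps_cands \<nu> h" "frac_le q r"
    using assms(2) unfolding eps_le_def by blast
  with q show "\<exists>r\<in>eps_cands \<nu> h. frac_le p r"
    using frac_le_trans[OF snd_eps_cands_pos[OF q(1)]] by blast
qed

lemma eps_le_total: "eps_le \<nu> f g \<or> eps_le \<nu> g f"
  unfolding eps_le_def using frac_le_total by blast

lemma hasse_bound_if_eps_le:
  assumes "eps_le \<nu> f g" "\<forall>p\<in>eps_cands \<nu> g. frac_le p (D, b)" "1 \<le> k" "hasse k f \<noteq> 0"
  shows "nsm b (\<nu> f - \<nu> (hasse k f)) \<le> nsm k D"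
proof -
  have "(\<nu> f - \<nu> (hasse k f), k) \<in> eps_cands \<nu> f"
    using assms(3,4) le_degree_if_hasse_nonzero[OF assms(4)] unfolding eps_cands_def by auto
  then obtain q where "q \<in> eps_cands \<nu> g" "frac_le (\<nu> f - \<nu> (hasse k f), k) q"
    using assms(1) unfolding eps_le_def by blast
  then have "frac_le (\<nu> f - \<nu> (hasse k f), k) (D, b)"
    using frac_le_trans[OF snd_eps_cands_pos] assms(2) by blast
  then show ?thesis by (simp add: frac_le_def)
qed

lemma eps_cands_smult:
  assumes "is_valuation \<nu>" "c \<noteq> 0"
  shows "eps_cands \<nu> (smult c f) = eps_cands \<nu> f"
proof (cases "f = 0")
  case False
  have "\<nu> (smult c f) - \<nu> (hasse k (smult c f)) = \<nu> f - \<nu> (hasse k f)" if "hasse k f \<noteq> 0" for k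
    using that False assms by (simp add: hasse_smult val_smult)
  then show ?thesis
    using assms unfolding eps_cands_def by (auto simp: hasse_smult)
qed simp

lemma key_poly_degree_le_if_eps_le:
  "key_poly \<nu> Q \<Longrightarrow> 1 \<le> degree f \<Longrightarrow> eps_le \<nu> Q f \<Longrightarrow> degree Q \<le> degree f"
  unfolding key_poly_def by blast

lemma key_poly_degree_mono:
  "key_poly \<nu> Q \<Longrightarrow> key_poly \<nu> Q' \<Longrightarrow> eps_le \<nu> Q Q' \<Longrightarrow> degree Q \<le> degree Q'"
  using key_poly_degree_le_if_eps_le[of \<nu> Q Q'] by (simp add: key_poly_def)

text \<open>Normalise a polynomial of least degree \<open>\<ge> 1\<close> whose \<open>\<epsilon>\<close> dominates \<open>\<epsilon>(f)\<close>.\<close>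

lemma key_poly_eps_above:
  assumes val: "is_valuation \<nu>" and "1 \<le> degree f"
  obtains Q where "key_poly \<nu> Q" "degree Q \<le> degree f" "eps_le \<nu> f Q"
proof -
  define P where "P n \<longleftrightarrow> (\<exists>g. degree g = n \<and> 1 \<le> n \<and> eps_le \<nu> f g)" for n
  have "P (degree f)" using assms eps_le_refl unfolding P_def by blast
  define n where "n = (LEAST n. P n)"
  have "P n" unfolding n_def using \<open>P (degree f)\<close> by (rule LeastI)
  then obtain g where g: "degree g = n" "1 \<le> n" "eps_le \<nu> f g" unfolding P_def by blast
  have n_le: "n \<le> degree f" unfolding n_def using \<open>P (degree f)\<close> by (rule Least_le)
  define Q where "Q = smult (inverse (lead_coeff g)) g"
  have g_nonzero: "g \<noteq> 0" using g by auto
  then have inv_nonzero: "inverse (lead_coeff g) \<noteq> 0" by simp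
  have degree_Q: "degree Q = n" using g inv_nonzero by (simp add: Q_def)
  have fQ: "eps_le \<nu> f Q"
    using g(3) unfolding eps_le_def Q_def eps_cands_smult[OF val inv_nonzero] .
  have "key_poly \<nu> Q"
    unfolding key_poly_def
  proof (intro conjI allI impI)
    show "lead_coeff Q = 1" using g_nonzero by (simp add: Q_def)
    show "1 \<le> degree Q" using degree_Q g by simp
    fix h :: "'a poly"
    assume "1 \<le> degree h" "eps_le \<nu> Q h"
    then have "P (degree h)" using fQ eps_le_trans unfolding P_def by blast
    then show "degree Q \<le> degree h" unfolding degree_Q n_def by (rule Least_le)
  qed
  with that degree_Q n_le fQ show ?thesis by simp
qed

lemma finite_total_preorder_has_greatest:
  assumes "finite A" "A \<noteq> {}"
    and total: "\<And>x y. x \<in> A \<Longrightarrow> y \<in> A \<Longrightarrow> r x y \<or> r y x"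
    and trans: "\<And>x y z. x \<in> A \<Longrightarrow> y \<in> A \<Longrightarrow> z \<in> A \<Longrightarrow> r x y \<Longrightarrow> r y z \<Longrightarrow> r x z"
  shows "\<exists>m\<in>A. \<forall>x\<in>A. r x m"
  using assms(1,2) total trans
proof (induct A rule: finite_ne_induct)
  case (singleton x)
  show ?case using singleton.prems(1)[of x x] by simp
next
  case (insert x F)
  have "\<exists>m\<in>F. \<forall>y\<in>F. r y m"
  proof (rule insert.hyps(4))
    fix u v assume "u \<in> F" "v \<in> F"
    then show "r u v \<or> r v u" using insert.prems(1)[of u v] by simp
  next
    fix u v w assume "u \<in> F" "v \<in> F" "w \<in> F" "r u v" "r v w"
    then show "r u w" using insert.prems(2)[of u v w] by simp
  qed
  then obtain m where m: "m \<in> F" "\<And>y. y \<in> F \<Longrightarrow> r y m"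
    by blast
  show ?case
  proof (cases "r x m")
    case True
    with m show ?thesis by auto
  next
    case False
    then have "r m x" using insert.prems(1)[of x m] m(1) by simp
    moreover have "r y x" if "y \<in> F" for y
      using insert.prems(2)[of y m x] m that \<open>r m x\<close> by simp
    ultimately show ?thesis
      using insert.prems(1)[of x x] by auto
  qed
qed

text \<open>Among the indices realising the maximum \<open>\<epsilon>(R)\<close> of the candidates we take the largest
  one; this is what makes the leading term in the expansion of \<open>\<partial>\<^sub>b\<^sub>t f\<close> unique.\<close>

lemma eps_cands_greatest_last:
  assumes "1 \<le> degree R"
  obtains b where "1 \<le> b" "b \<le> degree R" "hasse b R \<noteq> 0"
    "\<forall>p\<in>eps_cands \<nu> R. frac_le p (\<nu> R - \<nu> (hasse b R), b)"
    "\<And>k. b < k \<Longrightarrow> hasse k R \<noteq> 0 \<Longrightarrow> \<not> frac_le (\<nu> R - \<nu> (hasse b R), b) (\<nu> R - \<nu> (hasse k R), k)"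
proof -
  define K where "K = {k. 1 \<le> k \<and> k \<le> degree R \<and> hasse k R \<noteq> 0}"
  define cand where "cand k = (\<nu> R - \<nu> (hasse k R), k)" for k
  have cands: "eps_cands \<nu> R = cand ` K"
    unfolding eps_cands_def K_def cand_def by blast
  have "finite K" by (simp add: K_def)
  have "degree R \<in> K"
    using assms hasse_degree[of R] by (auto simp: K_def)
  have trans: "frac_le (cand x) (cand z)"
    if "y \<in> K" "frac_le (cand x) (cand y)" "frac_le (cand y) (cand z)" for x y z
    using that frac_le_trans[of "cand y"] by (auto simp: K_def cand_def)
  have "\<exists>m\<in>K. \<forall>k\<in>K. frac_le (cand k) (cand m)"
    by (rule finite_total_preorder_has_greatest[OF \<open>finite K\<close>])
      (use \<open>degree R \<in> K\<close> frac_le_total trans in blast)+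
  then obtain m where m: "m \<in> K" "\<forall>k\<in>K. frac_le (cand k) (cand m)"
    by blast
  define A where "A = {k\<in>K. frac_le (cand m) (cand k)}"
  have "finite A" "m \<in> A"
    using \<open>finite K\<close> m(1) by (auto simp: A_def frac_le_refl)
  define b where "b = Max A"
  have "b \<in> A" unfolding b_def using \<open>finite A\<close> \<open>m \<in> A\<close> by (intro Max_in) auto
  then have b: "b \<in> K" "frac_le (cand m) (cand b)" by (auto simp: A_def)
  show ?thesis
  proof (rule that)
    show "1 \<le> b" "b \<le> degree R" "hasse b R \<noteq> 0" using b(1) by (auto simp: K_def)
    have "frac_le (cand k) (cand b)" if "k \<in> K" for k
      using trans[OF m(1) _ b(2)] m(2) that by blast
    then show "\<forall>p\<in>eps_cands \<nu> R. frac_le p (\<nu> R - \<nu> (hasse b R), b)"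
      unfolding cands by (simp add: cand_def)
    fix k assume "b < k" "hasse k R \<noteq> 0"
    then have "k \<in> K" "k \<notin> A"
      using b(1) le_degree_if_hasse_nonzero[of k R] Max_ge[OF \<open>finite A\<close>, of k]
      by (auto simp: K_def b_def)
    then show "\<not> frac_le (\<nu> R - \<nu> (hasse b R), b) (\<nu> R - \<nu> (hasse k R), k)"
      using trans[of b m k] b by (auto simp: A_def cand_def)
  qed
qed

section \<open>Hasse derivatives of powers of a key polynomial\<close>

text \<open>\<open>eps_below \<nu> c D b\<close> says \<open>\<epsilon>(c) < D/b\<close>.\<close>

definition eps_below ::
    "('a::field poly \<Rightarrow> 'g::linordered_ab_group_add) \<Rightarrow> 'a poly \<Rightarrow> 'g \<Rightarrow> nat \<Rightarrow> bool" where
  "eps_below \<nu> c D b \<longleftrightarrow> (\<forall>j\<ge>1. scaled_val_gt \<nu> b (nsm j D) (nsm b (\<nu> c)) (hasse j c))"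

text \<open>With \<open>\<epsilon>(R) = D/b\<close>, the assumptions read \<open>\<nu>(\<partial>\<^sub>kR) \<ge> \<nu>(R) - k\<epsilon>(R)\<close>, strictly for \<open>k > b\<close>.\<close>

locale hasse_dominant =
  fixes \<nu> :: "'a::field poly \<Rightarrow> 'g::linordered_ab_group_add" and R :: "'a poly" and b :: nat and D :: 'g
  assumes valuation: "is_valuation \<nu>" and nonzero: "R \<noteq> 0" and index_pos: "1 \<le> b"
    and hasse_bound: "\<And>k. scaled_val_ge \<nu> b (nsm k D) (nsm b (\<nu> R)) (hasse k R)"
    and hasse_bound_strict: "\<And>k. b < k \<Longrightarrow> scaled_val_gt \<nu> b (nsm k D) (nsm b (\<nu> R)) (hasse k R)"
begin

lemma nsm_val_power_Suc: "nsm b (\<nu> (R * R ^ i)) = nsm b (\<nu> R) + nsm b (\<nu> (R ^ i))"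
  using nonzero by (simp add: nsm_val_mult[OF valuation])

lemma nsm_split: "k \<le> m \<Longrightarrow> nsm m D = nsm k D + nsm (m - k) D"
  by (simp add: nsm_add_left[symmetric])

lemma hasse_power_bound: "scaled_val_ge \<nu> b (nsm m D) (nsm b (\<nu> (R ^ i))) (hasse m (R ^ i))"
proof (induct i arbitrary: m)
  case 0
  then show ?case by (simp add: hasse_1 scaled_val_ge_def val_1[OF valuation])
next
  case (Suc i)
  have "scaled_val_ge \<nu> b (nsm m D) (nsm b (\<nu> (R * R ^ i))) (hasse k R * hasse (m - k) (R ^ i))"
    if "k \<le> m" for k
    using that by (intro scaled_val_ge_mult[OF valuation hasse_bound Suc])
      (simp_all add: nsm_split nsm_val_power_Suc)
  then show ?case
    unfolding power_Suc hasse_mult by (intro scaled_val_ge_sum[OF valuation]) simp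
qed

lemma hasse_power_bound_strict:
  "b * i < m \<Longrightarrow> scaled_val_gt \<nu> b (nsm m D) (nsm b (\<nu> (R ^ i))) (hasse m (R ^ i))"
proof (induct i arbitrary: m)
  case 0
  then show ?case by (simp add: hasse_1)
next
  case (Suc i)
  have "scaled_val_gt \<nu> b (nsm m D) (nsm b (\<nu> (R * R ^ i))) (hasse k R * hasse (m - k) (R ^ i))"
    if "k \<le> m" for k
  proof (cases "b < k")
    case True
    with that show ?thesis
      by (intro scaled_val_gt_mult_left[OF valuation hasse_bound_strict hasse_power_bound])
        (simp_all add: nsm_split nsm_val_power_Suc)
  next
    case False
    with that Suc.prems show ?thesis
      by (intro scaled_val_gt_mult_right[OF valuation hasse_bound Suc.hyps])
        (simp_all add: nsm_split nsm_val_power_Suc)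
  qed
  then show ?case
    unfolding power_Suc hasse_mult by (intro scaled_val_gt_sum[OF valuation]) simp
qed

text \<open>The unique leading term: the term \<open>(\<partial>\<^sub>bR)\<^sup>i\<close> from \<open>k = b\<close> in every factor of the
  iterated Leibniz rule.\<close>

lemma hasse_power_leading:
  obtains E where "hasse (b * i) (R ^ i) = (hasse b R) ^ i + E"
    "scaled_val_gt \<nu> b (nsm (b * i) D) (nsm b (\<nu> (R ^ i))) E"
proof (induct i arbitrary: thesis)
  case 0
  then show ?case by (simp add: hasse_1)
next
  case (Suc i)
  obtain E where E: "hasse (b * i) (R ^ i) = (hasse b R) ^ i + E"
    "scaled_val_gt \<nu> b (nsm (b * i) D) (nsm b (\<nu> (R ^ i))) E"
    using Suc.hyps by blast
  define m where "m = b * Suc i"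
  define F where "F = (\<Sum>k\<in>{..m} - {b}. hasse k R * hasse (m - k) (R ^ i))"
  have "hasse m (R ^ Suc i) = (\<Sum>k\<le>m. hasse k R * hasse (m - k) (R ^ i))"
    by (simp only: power_Suc hasse_mult)
  also have "\<dots> = hasse b R * hasse (m - b) (R ^ i) + F"
    unfolding F_def by (rule sum.remove) (simp_all add: m_def)
  also have "\<dots> = (hasse b R) ^ Suc i + (hasse b R * E + F)"
    by (simp add: m_def E(1) algebra_simps)
  finally have expand: "hasse m (R ^ Suc i) = (hasse b R) ^ Suc i + (hasse b R * E + F)" .
  have "scaled_val_gt \<nu> b (nsm m D) (nsm b (\<nu> (R ^ Suc i))) (hasse b R * E)"
    by (rule scaled_val_gt_mult_right[OF valuation hasse_bound E(2)])
      (simp_all add: m_def nsm_val_power_Suc nsm_add_left[symmetric])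
  moreover have "scaled_val_gt \<nu> b (nsm m D) (nsm b (\<nu> (R ^ Suc i))) F"
    unfolding F_def
  proof (rule scaled_val_gt_sum[OF valuation])
    fix k assume k: "k \<in> {..m} - {b}"
    show "scaled_val_gt \<nu> b (nsm m D) (nsm b (\<nu> (R ^ Suc i))) (hasse k R * hasse (m - k) (R ^ i))"
    proof (cases "b < k")
      case True
      with k show ?thesis
        by (intro scaled_val_gt_mult_left[OF valuation hasse_bound_strict hasse_power_bound])
          (simp_all add: nsm_split nsm_val_power_Suc)
    next
      case False
      with k have "b * i < m - k" by (auto simp: m_def)
      with k show ?thesis
        by (intro scaled_val_gt_mult_right[OF valuation hasse_bound hasse_power_bound_strict])
          (simp_all add: nsm_split nsm_val_power_Suc)
    qed
  qed
  ultimately show ?case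
    using Suc.prems expand scaled_val_gt_add[OF valuation] by (simp add: m_def)
qed

context
  fixes c :: "'a poly"
  assumes coeff_eps: "eps_below \<nu> c D b" and coeff_nonzero: "c \<noteq> 0"
begin

lemma coeff_bound: "1 \<le> j \<Longrightarrow> scaled_val_gt \<nu> b (nsm j D) (nsm b (\<nu> c)) (hasse j c)"
  using coeff_eps by (simp add: eps_below_def)

lemma nsm_val_mult_power: "nsm b (\<nu> (c * R ^ i)) = nsm b (\<nu> c) + nsm b (\<nu> (R ^ i))"
  using coeff_nonzero nonzero by (simp add: nsm_val_mult[OF valuation])

lemma hasse_mult_power_term_bound:
  assumes "j \<le> m"
  shows "scaled_val_ge \<nu> b (nsm m D) (nsm b (\<nu> (c * R ^ i))) (hasse j c * hasse (m - j) (R ^ i))"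
proof (cases "j = 0")
  case True
  then show ?thesis
    by (intro scaled_val_ge_mult[OF valuation scaled_val_ge_self hasse_power_bound])
      (simp_all add: nsm_val_mult_power)
next
  case False
  with assms show ?thesis
    by (intro scaled_val_ge_mult[OF valuation scaled_val_gt_imp_ge[OF coeff_bound] hasse_power_bound])
      (simp_all add: nsm_val_mult_power nsm_split)
qed

lemma hasse_mult_power_term_bound_strict:
  assumes "j \<le> m" "0 < j \<or> b * i < m"
  shows "scaled_val_gt \<nu> b (nsm m D) (nsm b (\<nu> (c * R ^ i))) (hasse j c * hasse (m - j) (R ^ i))"
proof (cases "j = 0")
  case True
  with assms show ?thesis
    by (intro scaled_val_gt_mult_right[OF valuation scaled_val_ge_self hasse_power_bound_strict])
      (simp_all add: nsm_val_mult_power)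
next
  case False
  with assms show ?thesis
    by (intro scaled_val_gt_mult_left[OF valuation coeff_bound hasse_power_bound])
      (simp_all add: nsm_val_mult_power nsm_split)
qed

lemma hasse_mult_power_bound:
  "scaled_val_ge \<nu> b (nsm m D) (nsm b (\<nu> (c * R ^ i))) (hasse m (c * R ^ i))"
  unfolding hasse_mult
  by (intro scaled_val_ge_sum[OF valuation] hasse_mult_power_term_bound) simp

lemma hasse_mult_power_bound_strict:
  "b * i < m \<Longrightarrow> scaled_val_gt \<nu> b (nsm m D) (nsm b (\<nu> (c * R ^ i))) (hasse m (c * R ^ i))"
  unfolding hasse_mult
  by (intro scaled_val_gt_sum[OF valuation] hasse_mult_power_term_bound_strict) simp_all

lemma hasse_mult_power_leading:
  obtains E where "hasse (b * i) (c * R ^ i) = c * (hasse b R) ^ i + E"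
    "scaled_val_gt \<nu> b (nsm (b * i) D) (nsm b (\<nu> (c * R ^ i))) E"
proof -
  obtain E where E: "hasse (b * i) (R ^ i) = (hasse b R) ^ i + E"
    "scaled_val_gt \<nu> b (nsm (b * i) D) (nsm b (\<nu> (R ^ i))) E"
    by (rule hasse_power_leading)
  define F where "F = (\<Sum>j\<in>{..b * i} - {0}. hasse j c * hasse (b * i - j) (R ^ i))"
  have "hasse (b * i) (c * R ^ i) = c * hasse (b * i) (R ^ i) + F"
    unfolding F_def hasse_mult by (simp add: sum.remove[of "{..b * i}" 0])
  then have "hasse (b * i) (c * R ^ i) = c * (hasse b R) ^ i + (c * E + F)"
    by (simp add: E(1) algebra_simps)
  moreover have "scaled_val_gt \<nu> b (nsm (b * i) D) (nsm b (\<nu> (c * R ^ i))) (c * E)"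
    by (rule scaled_val_gt_mult_right[OF valuation scaled_val_ge_self E(2)])
      (simp_all add: nsm_val_mult_power)
  moreover have "scaled_val_gt \<nu> b (nsm (b * i) D) (nsm b (\<nu> (c * R ^ i))) F"
    unfolding F_def
    by (intro scaled_val_gt_sum[OF valuation] hasse_mult_power_term_bound_strict) auto
  ultimately show ?thesis
    using that scaled_val_gt_add[OF valuation] by blast
qed

end

end

section \<open>Expansions in powers of a key polynomial\<close>

lemma exists_last_minimiser:
  fixes v :: "nat \<Rightarrow> 'b::linorder"
  assumes "finite N" "N \<noteq> {}"
  shows "\<exists>t\<in>N. (\<forall>i\<in>N. v t \<le> v i) \<and> (\<forall>i\<in>N. t < i \<longrightarrow> v t < v i)"
proof -
  define M where "M = {i \<in> N. v i = Min (v ` N)}"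
  have "Min (v ` N) \<in> v ` N" using assms by (intro Min_in) auto
  then obtain i where "i \<in> N" "v i = Min (v ` N)"
    by auto
  then have "finite M" "M \<noteq> {}"
    using assms by (auto simp: M_def)
  define t where "t = Max M"
  have "t \<in> M" unfolding t_def using \<open>finite M\<close> \<open>M \<noteq> {}\<close> by (rule Max_in)
  have min: "v t \<le> v i" if "i \<in> N" for i
    using \<open>t \<in> M\<close> that assms(1) by (simp add: M_def)
  have strict: "v t < v i" if "i \<in> N" "t < i" for i
  proof -
    have "i \<notin> M" using that Max_ge[OF \<open>finite M\<close>, of i] by (auto simp: t_def)
    then show ?thesis using min[OF \<open>i \<in> N\<close>] \<open>t \<in> M\<close> \<open>i \<in> N\<close> by (auto simp: M_def)
  qed
  have "t \<in> N" using \<open>t \<in> M\<close> by (simp add: M_def)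
  with min strict show ?thesis by blast
qed

lemma adic_expansion_Suc:
  fixes R :: "'a::field poly"
  assumes "q = (\<Sum>i\<le>s. d i * R ^ i)"
  shows "r + q * R = (\<Sum>i\<le>Suc s. (case i of 0 \<Rightarrow> r | Suc j \<Rightarrow> d j) * R ^ i)"
proof -
  have "q * R = (\<Sum>i\<le>s. d i * R ^ Suc i)"
    unfolding assms sum_distrib_right by (simp add: mult_ac)
  then show ?thesis unfolding sum.atMost_Suc_shift by simp
qed

lemma adic_expansion_exists:
  fixes R :: "'a::field poly"
  assumes "1 \<le> degree R"
  shows "\<exists>s d. q = (\<Sum>i\<le>s. d i * R ^ i) \<and> (\<forall>i. degree (d i) < degree R)"
proof (induct "degree q" arbitrary: q rule: less_induct)
  case less
  show ?case
  proof (cases "degree q < degree R")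
    case True
    with assms show ?thesis
      by (intro exI[of _ 0] exI[of _ "\<lambda>i. if i = 0 then q else 0"]) auto
  next
    case False
    have "R \<noteq> 0" using assms by auto
    have "degree (q div R) < degree q" using False assms by (intro degree_div_less) auto
    with less obtain s d where d: "q div R = (\<Sum>i\<le>s. d i * R ^ i)" "\<forall>i. degree (d i) < degree R"
      by blast
    define d' where "d' i = (case i of 0 \<Rightarrow> q mod R | Suc j \<Rightarrow> d j)" for i
    have "q = q mod R + q div R * R" by simp
    also have "\<dots> = (\<Sum>i\<le>Suc s. d' i * R ^ i)"
      unfolding d'_def by (rule adic_expansion_Suc[OF d(1)])
    finally have "q = (\<Sum>i\<le>Suc s. d' i * R ^ i)" .
    moreover have "degree (d' i) < degree R" for i
      using d(2) degree_mod_less[OF \<open>R \<noteq> 0\<close>, of q] assms by (cases i) (auto simp: d'_def)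
    ultimately show ?thesis by blast
  qed
qed

lemma key_poly_hasse_dominant:
  assumes val: "is_valuation \<nu>" and key: "key_poly \<nu> R"
  obtains b where "hasse_dominant \<nu> R b (\<nu> R - \<nu> (hasse b R))" "hasse b R \<noteq> 0"
    "\<forall>p\<in>eps_cands \<nu> R. frac_le p (\<nu> R - \<nu> (hasse b R), b)"
proof -
  have "1 \<le> degree R" using key by (simp add: key_poly_def)
  obtain b where b: "1 \<le> b" "b \<le> degree R" "hasse b R \<noteq> 0"
    and greatest: "\<forall>p\<in>eps_cands \<nu> R. frac_le p (\<nu> R - \<nu> (hasse b R), b)"
    and last: "\<And>k. b < k \<Longrightarrow> hasse k R \<noteq> 0 \<Longrightarrow>
      \<not> frac_le (\<nu> R - \<nu> (hasse b R), b) (\<nu> R - \<nu> (hasse k R), k)"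
    using eps_cands_greatest_last[OF \<open>1 \<le> degree R\<close>, of \<nu>] by blast
  define D where "D = \<nu> R - \<nu> (hasse b R)"
  have "hasse_dominant \<nu> R b D"
  proof
    show "is_valuation \<nu>" "R \<noteq> 0" "1 \<le> b"
      using val key b by (auto simp: key_poly_def)
    fix k
    show "scaled_val_ge \<nu> b (nsm k D) (nsm b (\<nu> R)) (hasse k R)"
    proof (cases "hasse k R = 0 \<or> k = 0")
      case False
      then have "(\<nu> R - \<nu> (hasse k R), k) \<in> eps_cands \<nu> R"
        using le_degree_if_hasse_nonzero[of k R] by (auto simp: eps_cands_def)
      then have "nsm b (\<nu> R - \<nu> (hasse k R)) \<le> nsm k D"
        using greatest by (auto simp: frac_le_def D_def)
      then show ?thesis by (simp add: scaled_val_ge_def nsm_diff algebra_simps)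
    qed (auto simp: scaled_val_ge_def)
    assume "b < k"
    then have "hasse k R = 0 \<or> nsm b (\<nu> R - \<nu> (hasse k R)) < nsm k D"
      using last[of k] by (auto simp: frac_le_def D_def not_le)
    then show "scaled_val_gt \<nu> b (nsm k D) (nsm b (\<nu> R)) (hasse k R)"
      by (auto simp: scaled_val_gt_def nsm_diff algebra_simps)
  qed
  with b greatest that show ?thesis by (simp add: D_def)
qed

lemma key_poly_eps_below_lower_degree:
  assumes key: "key_poly \<nu> R" and "0 < b"
    and greatest: "\<forall>p\<in>eps_cands \<nu> R. frac_le p (D, b)"
    and "degree c < degree R"
  shows "eps_below \<nu> c D b"
  unfolding eps_below_def
proof (intro allI impI)
  fix j :: nat assume "1 \<le> j"
  show "scaled_val_gt \<nu> b (nsm j D) (nsm b (\<nu> c)) (hasse j c)"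
  proof (cases "hasse j c = 0")
    case False
    then have "j \<le> degree c" by (rule le_degree_if_hasse_nonzero)
    then have cand: "(\<nu> c - \<nu> (hasse j c), j) \<in> eps_cands \<nu> c"
      using False \<open>1 \<le> j\<close> unfolding eps_cands_def by blast
    have "\<not> eps_le \<nu> R c"
      using key_poly_degree_le_if_eps_le[OF key, of c] \<open>j \<le> degree c\<close> assms(4) \<open>1 \<le> j\<close> by auto
    then obtain p where p: "p \<in> eps_cands \<nu> R" "\<forall>q\<in>eps_cands \<nu> c. \<not> frac_le p q"
      unfolding eps_le_def by blast
    have "\<not> frac_le (D, b) (\<nu> c - \<nu> (hasse j c), j)"
      using frac_le_trans[of "(D, b)" p] greatest p cand \<open>0 < b\<close> by auto
    then have "nsm b (\<nu> c - \<nu> (hasse j c)) < nsm j D" by (simp add: frac_le_def)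
    then show ?thesis by (simp add: scaled_val_gt_def nsm_diff algebra_simps)
  qed (simp add: scaled_val_gt_def)
qed

context hasse_dominant
begin

text \<open>In \<open>f = \<Sum> c\<^sub>i R\<^sup>i\<close>, if \<open>t\<close> is the last index of a term of minimal value, then
  \<open>\<partial>\<^sub>b\<^sub>tf\<close> is \<open>c\<^sub>t(\<partial>\<^sub>bR)\<^sup>t\<close> up to terms of larger value: the terms \<open>i < t\<close> only involve
  \<open>\<partial>\<^sub>jc\<^sub>i\<close> with \<open>j \<ge> 1\<close> or derivatives of \<open>R\<^sup>i\<close> of order \<open>> bi\<close>, both losing strictly more than
  order times \<open>\<epsilon>(R)\<close>; the terms \<open>i > t\<close> have larger value to begin with.\<close>

lemma hasse_expansion_leading:
  assumes coeff_eps: "\<And>i. eps_below \<nu> (c i) D b"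
    and "t \<le> s" "c t \<noteq> 0"
    and before: "\<And>i. i < t \<Longrightarrow> c i \<noteq> 0 \<Longrightarrow> \<nu> (c t * R ^ t) \<le> \<nu> (c i * R ^ i)"
    and after: "\<And>i. t < i \<Longrightarrow> i \<le> s \<Longrightarrow> c i \<noteq> 0 \<Longrightarrow> \<nu> (c t * R ^ t) < \<nu> (c i * R ^ i)"
  obtains E where "hasse (b * t) (\<Sum>i\<le>s. c i * R ^ i) = c t * (hasse b R) ^ t + E"
    "scaled_val_gt \<nu> b (nsm (b * t) D) (nsm b (\<nu> (c t * R ^ t))) E"
proof -
  define \<mu> where "\<mu> = \<nu> (c t * R ^ t)"
  obtain E where E: "hasse (b * t) (c t * R ^ t) = c t * (hasse b R) ^ t + E"
    "scaled_val_gt \<nu> b (nsm (b * t) D) (nsm b \<mu>) E"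
    unfolding \<mu>_def
    by (rule hasse_mult_power_leading[OF coeff_eps \<open>c t \<noteq> 0\<close>])
  define F where "F = (\<Sum>i\<in>{..s} - {t}. hasse (b * t) (c i * R ^ i))"
  have "hasse (b * t) (\<Sum>i\<le>s. c i * R ^ i) = hasse (b * t) (c t * R ^ t) + F"
    unfolding F_def hasse_sum by (rule sum.remove) (use \<open>t \<le> s\<close> in simp_all)
  then have "hasse (b * t) (\<Sum>i\<le>s. c i * R ^ i) = c t * (hasse b R) ^ t + (E + F)"
    by (simp add: E(1) algebra_simps)
  moreover have "scaled_val_gt \<nu> b (nsm (b * t) D) (nsm b \<mu>) F"
    unfolding F_def
  proof (rule scaled_val_gt_sum[OF valuation])
    fix i assume i: "i \<in> {..s} - {t}"
    show "scaled_val_gt \<nu> b (nsm (b * t) D) (nsm b \<mu>) (hasse (b * t) (c i * R ^ i))"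
    proof (cases "c i = 0")
      case False
      note bounds = hasse_mult_power_bound[OF coeff_eps False]
        hasse_mult_power_bound_strict[OF coeff_eps False]
      show ?thesis
      proof (cases "i < t")
        case True
        then have "b * i < b * t" using index_pos by simp
        with bounds(2) have "scaled_val_gt \<nu> b (nsm (b * t) D) (nsm b (\<nu> (c i * R ^ i)))
            (hasse (b * t) (c i * R ^ i))" .
        moreover have "nsm b \<mu> \<le> nsm b (\<nu> (c i * R ^ i))"
          using before[OF True False] by (simp add: \<mu>_def nsm_mono)
        ultimately show ?thesis by (rule scaled_val_gt_trans)
      next
        case False
        with i have "t < i" "i \<le> s" by auto
        then have "nsm b \<mu> < nsm b (\<nu> (c i * R ^ i))"
          using after \<open>c i \<noteq> 0\<close> index_pos by (simp add: \<mu>_def nsm_strict_mono)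
        with bounds(1) show ?thesis by (rule scaled_val_ge_gt_trans)
      qed
    qed simp
  qed
  ultimately show ?thesis
    using that E(2) scaled_val_gt_add[OF valuation] by (simp add: \<mu>_def)
qed

lemma hasse_expansion_val:
  assumes D: "D = \<nu> R - \<nu> (hasse b R)" and "hasse b R \<noteq> 0"
    and coeff_eps: "\<And>i. eps_below \<nu> (c i) D b"
    and "t \<le> s" "c t \<noteq> 0"
    and "\<And>i. i < t \<Longrightarrow> c i \<noteq> 0 \<Longrightarrow> \<nu> (c t * R ^ t) \<le> \<nu> (c i * R ^ i)"
    and "\<And>i. t < i \<Longrightarrow> i \<le> s \<Longrightarrow> c i \<noteq> 0 \<Longrightarrow> \<nu> (c t * R ^ t) < \<nu> (c i * R ^ i)"
  shows "hasse (b * t) (\<Sum>i\<le>s. c i * R ^ i) \<noteq> 0"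
    and "\<nu> (hasse (b * t) (\<Sum>i\<le>s. c i * R ^ i)) = \<nu> (c t * R ^ t) - nsm t D"
proof -
  obtain E where E: "hasse (b * t) (\<Sum>i\<le>s. c i * R ^ i) = c t * (hasse b R) ^ t + E"
    "scaled_val_gt \<nu> b (nsm (b * t) D) (nsm b (\<nu> (c t * R ^ t))) E"
    by (rule hasse_expansion_leading[OF assms(3-7)])
  define lead where "lead = c t * (hasse b R) ^ t"
  have "lead \<noteq> 0" using \<open>c t \<noteq> 0\<close> \<open>hasse b R \<noteq> 0\<close> by (simp add: lead_def)
  have val_lead: "\<nu> lead = \<nu> (c t * R ^ t) - nsm t D"
    using \<open>c t \<noteq> 0\<close> \<open>hasse b R \<noteq> 0\<close> nonzero
    by (simp add: lead_def D val_mult[OF valuation] val_power[OF valuation] nsm_diff)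
  have "E = 0 \<or> \<nu> lead < \<nu> E"
  proof (cases "E = 0")
    case False
    have "nsm b (\<nu> lead) + nsm (b * t) D = nsm b (\<nu> (c t * R ^ t))"
      by (simp add: val_lead nsm_diff nsm_mult)
    with E(2) False have "nsm b (\<nu> lead) < nsm b (\<nu> E)"
      by (simp add: scaled_val_gt_def) (metis add_less_cancel_right)
    then show ?thesis by (simp add: nsm_less_cancel)
  qed simp
  from val_add_eq_if_less[OF valuation \<open>lead \<noteq> 0\<close> this] E(1) val_lead
  show "hasse (b * t) (\<Sum>i\<le>s. c i * R ^ i) \<noteq> 0"
    and "\<nu> (hasse (b * t) (\<Sum>i\<le>s. c i * R ^ i)) = \<nu> (c t * R ^ t) - nsm t D"
    by (simp_all add: lead_def)
qed

end

lemma key_poly_expansion_val_ge: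
  assumes val: "is_valuation \<nu>" and key: "key_poly \<nu> R"
    and f: "f = (\<Sum>i\<le>s. c i * R ^ i)" "f \<noteq> 0" and degree_c: "\<And>i. degree (c i) < degree R"
    and eps: "eps_le \<nu> f R"
    and "i \<le> s" "c i \<noteq> 0"
  shows "\<nu> f \<le> \<nu> (c i * R ^ i)"
proof (rule ccontr)
  assume "\<not> \<nu> f \<le> \<nu> (c i * R ^ i)"
  obtain b where dom: "hasse_dominant \<nu> R b (\<nu> R - \<nu> (hasse b R))" "hasse b R \<noteq> 0"
    and greatest: "\<forall>p\<in>eps_cands \<nu> R. frac_le p (\<nu> R - \<nu> (hasse b R), b)"
    using key_poly_hasse_dominant[OF val key] by blast
  define D where "D = \<nu> R - \<nu> (hasse b R)"
  interpret hasse_dominant \<nu> R b D using dom(1) by (simp add: D_def)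
  define N where "N = {i. i \<le> s \<and> c i \<noteq> 0}"
  have "finite N" "N \<noteq> {}" using \<open>i \<le> s\<close> \<open>c i \<noteq> 0\<close> by (auto simp: N_def)
  then obtain t where t: "t \<in> N"
    and min: "\<forall>i\<in>N. \<nu> (c t * R ^ t) \<le> \<nu> (c i * R ^ i)"
    and last: "\<forall>i\<in>N. t < i \<longrightarrow> \<nu> (c t * R ^ t) < \<nu> (c i * R ^ i)"
    using exists_last_minimiser[of N "\<lambda>i. \<nu> (c i * R ^ i)"] by blast
  have "t \<le> s" "c t \<noteq> 0" using t by (simp_all add: N_def)
  have before: "\<nu> (c t * R ^ t) \<le> \<nu> (c j * R ^ j)" if "j < t" "c j \<noteq> 0" for j
    using min that \<open>t \<le> s\<close> by (simp add: N_def)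
  have after: "\<nu> (c t * R ^ t) < \<nu> (c j * R ^ j)" if "t < j" "j \<le> s" "c j \<noteq> 0" for j
    using last that by (simp add: N_def)
  define \<mu> where "\<mu> = \<nu> (c t * R ^ t)"
  have "\<mu> \<le> \<nu> (c i * R ^ i)"
    using min \<open>i \<le> s\<close> \<open>c i \<noteq> 0\<close> by (simp add: \<mu>_def N_def)
  with \<open>\<not> \<nu> f \<le> \<nu> (c i * R ^ i)\<close> have "\<mu> < \<nu> f" by simp
  have coeff_eps: "eps_below \<nu> (c j) D b" for j
    using key_poly_eps_below_lower_degree[OF key _ greatest[folded D_def] degree_c] index_pos by simp
  note h = hasse_expansion_val[OF D_def dom(2) coeff_eps \<open>t \<le> s\<close> \<open>c t \<noteq> 0\<close> before after,
      folded f(1) \<mu>_def]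
  show False
  proof (cases "t = 0")
    case True
    with h \<open>\<mu> < \<nu> f\<close> show False by simp
  next
    case False
    have "nsm b (\<nu> f - \<nu> (hasse (b * t) f)) \<le> nsm (b * t) D"
      by (rule hasse_bound_if_eps_le[OF eps greatest[folded D_def]])
        (use False index_pos h(1) in simp_all)
    then have "nsm b (\<nu> f - \<mu>) \<le> 0"
      by (simp add: h(2) nsm_diff nsm_add_right nsm_mult algebra_simps)
    moreover have "0 < nsm b (\<nu> f - \<mu>)"
      using \<open>\<mu> < \<nu> f\<close> index_pos nsm_strict_mono[of b 0 "\<nu> f - \<mu>"] by simp
    ultimately show False by simp
  qed
qed

lemma key_poly_div_mod_val_ge:
  assumes val: "is_valuation \<nu>" and key: "key_poly \<nu> R"
    and "f \<noteq> 0" and eps: "eps_le \<nu> f R"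
  shows "val_ge \<nu> (f div R * R) f" and "val_ge \<nu> (f mod R) f"
proof -
  have "1 \<le> degree R" using key by (simp add: key_poly_def)
  then have "R \<noteq> 0" by auto
  obtain s d where d: "f div R = (\<Sum>i\<le>s. d i * R ^ i)" "\<forall>i. degree (d i) < degree R"
    using adic_expansion_exists[OF \<open>1 \<le> degree R\<close>] by blast
  define c where "c i = (case i of 0 \<Rightarrow> f mod R | Suc j \<Rightarrow> d j)" for i
  have "f = (\<Sum>i\<le>Suc s. c i * R ^ i)"
    unfolding c_def using adic_expansion_Suc[OF d(1), of "f mod R"] by simp
  moreover have "degree (c i) < degree R" for i
    using d(2) degree_mod_less[OF \<open>R \<noteq> 0\<close>, of f] \<open>1 \<le> degree R\<close> by (cases i) (auto simp: c_def)
  ultimately have term_val: "\<nu> f \<le> \<nu> (c i * R ^ i)" if "i \<le> Suc s" "c i \<noteq> 0" for i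
    using key_poly_expansion_val_ge[OF val key, where f = f and s = "Suc s" and c = c] \<open>f \<noteq> 0\<close> eps that by blast
  show "val_ge \<nu> (f mod R) f"
    using term_val[of 0] \<open>f \<noteq> 0\<close> by (auto simp: c_def val_ge_def)
  have "f div R * R = (\<Sum>i\<le>s. d i * R ^ Suc i)"
    unfolding d(1) sum_distrib_right by (simp add: mult_ac)
  also have "val_ge \<nu> \<dots> f"
    using term_val[of "Suc _"] \<open>f \<noteq> 0\<close>
    by (intro val_ge_sum[OF val]) (auto simp: c_def val_ge_def)
  finally show "val_ge \<nu> (f div R * R) f" .
qed

section \<open>Expansions in monomials of key polynomials\<close>

definition monomial_expansion ::
    "('a::field poly \<Rightarrow> 'g::linordered_ab_group_add) \<Rightarrow> 'a poly set \<Rightarrow> 'a poly \<Rightarrow> nat \<Rightarrow> 'a poly \<Rightarrow> bool" where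
  "monomial_expansion \<nu> S f d T \<longleftrightarrow> (\<exists>(r::nat) (a::nat \<Rightarrow> 'a) (lam::nat \<Rightarrow> 'a poly \<Rightarrow> nat).
        (\<forall>i<r. fin_exp S (lam i)) \<and>
        f = (\<Sum>i<r. smult (a i) (Qpow (lam i))) \<and>
        (\<forall>i<r. val_ge \<nu> (smult (a i) (Qpow (lam i))) T) \<and>
        (\<forall>i<r. \<forall>Q. lam i Q \<noteq> 0 \<longrightarrow> degree Q \<le> d))"

lemma GS1_star_iff_monomial_expansion:
  "GS1_star \<nu> S \<longleftrightarrow> (\<forall>f. monomial_expansion \<nu> S f (degree f) f)"
  unfolding GS1_star_def monomial_expansion_def by simp

lemma monomial_expansionE:
  assumes "monomial_expansion \<nu> S f d T"
  obtains r :: nat and a lam where "\<forall>i<r. fin_exp S (lam i)" "f = (\<Sum>i<r. smult (a i) (Qpow (lam i)))"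
    "\<forall>i<r. val_ge \<nu> (smult (a i) (Qpow (lam i))) T" "\<forall>i<r. \<forall>Q. lam i Q \<noteq> 0 \<longrightarrow> degree Q \<le> d"
  using assms unfolding monomial_expansion_def by blast

lemma monomial_expansion_const:
  assumes "degree f = 0"
  shows "monomial_expansion \<nu> S f d f"
proof -
  have "f = smult (coeff f 0) (Qpow (\<lambda>_. 0))"
    using degree_0_id[OF assms] by (simp add: Qpow_def)
  moreover have "fin_exp S (\<lambda>_. 0)" by (simp add: fin_exp_def)
  ultimately show ?thesis
    unfolding monomial_expansion_def
    by (intro exI[of _ 1] exI[of _ "\<lambda>_. coeff f 0"] exI[of _ "\<lambda>_ _. 0"]) (simp add: val_ge_def)
qed

lemma monomial_expansion_mono:
  assumes "monomial_expansion \<nu> S f d T" "val_ge \<nu> T T'" "d \<le> d'"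
  shows "monomial_expansion \<nu> S f d' T'"
proof -
  obtain r :: nat and a lam where "\<forall>i<r. fin_exp S (lam i)" "f = (\<Sum>i<r. smult (a i) (Qpow (lam i)))"
    "\<forall>i<r. val_ge \<nu> (smult (a i) (Qpow (lam i))) T" "\<forall>i<r. \<forall>Q. lam i Q \<noteq> 0 \<longrightarrow> degree Q \<le> d"
    using assms(1) by (rule monomial_expansionE)
  moreover have "val_ge \<nu> (smult (a i) (Qpow (lam i))) T'" if "i < r" for i
    using calculation(3) assms(2) that unfolding val_ge_def by auto
  moreover have "degree Q \<le> d'" if "i < r" "lam i Q \<noteq> 0" for i Q
    using calculation(4) assms(3) that by fastforce
  ultimately show ?thesis
    unfolding monomial_expansion_def by blast
qed

lemma sum_lessThan_add:
  fixes g :: "nat \<Rightarrow> 'b::comm_monoid_add"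
  shows "(\<Sum>i<m + n. g i) = (\<Sum>i<m. g i) + (\<Sum>i<n. g (m + i))"
  by (induct n) (simp_all add: add.assoc)

lemma monomial_expansion_add:
  assumes "monomial_expansion \<nu> S x d T" "monomial_expansion \<nu> S y d T"
  shows "monomial_expansion \<nu> S (x + y) d T"
proof -
  obtain r1 :: nat and a1 lam1 where 1: "\<forall>i<r1. fin_exp S (lam1 i)"
    "x = (\<Sum>i<r1. smult (a1 i) (Qpow (lam1 i)))" "\<forall>i<r1. val_ge \<nu> (smult (a1 i) (Qpow (lam1 i))) T"
    "\<forall>i<r1. \<forall>Q. lam1 i Q \<noteq> 0 \<longrightarrow> degree Q \<le> d"
    using assms(1) by (rule monomial_expansionE)
  obtain r2 :: nat and a2 lam2 where 2: "\<forall>i<r2. fin_exp S (lam2 i)"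
    "y = (\<Sum>i<r2. smult (a2 i) (Qpow (lam2 i)))" "\<forall>i<r2. val_ge \<nu> (smult (a2 i) (Qpow (lam2 i))) T"
    "\<forall>i<r2. \<forall>Q. lam2 i Q \<noteq> 0 \<longrightarrow> degree Q \<le> d"
    using assms(2) by (rule monomial_expansionE)
  define a where "a i = (if i < r1 then a1 i else a2 (i - r1))" for i
  define lam where "lam i = (if i < r1 then lam1 i else lam2 (i - r1))" for i
  have "x + y = (\<Sum>i<r1 + r2. smult (a i) (Qpow (lam i)))"
    unfolding sum_lessThan_add 1(2) 2(2) a_def lam_def by simp
  moreover have "fin_exp S (lam i) \<and> val_ge \<nu> (smult (a i) (Qpow (lam i))) T \<and>
      (\<forall>Q. lam i Q \<noteq> 0 \<longrightarrow> degree Q \<le> d)" if "i < r1 + r2" for i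
  proof (cases "i < r1")
    case False
    with that have "i - r1 < r2" by simp
    with False 2 show ?thesis by (simp add: a_def lam_def)
  qed (use 1 in \<open>simp add: a_def lam_def\<close>)
  ultimately show ?thesis
    unfolding monomial_expansion_def by blast
qed

lemma Qpow_mult:
  assumes "fin_exp S lam"
  shows "Qpow (\<lambda>Q. lam Q + (if Q = R then 1 else 0)) = Qpow lam * R"
proof -
  define F where "F = insert R {Q. lam Q \<noteq> 0}"
  have "finite F" using assms by (simp add: F_def fin_exp_def)
  have Qpow_F: "Qpow \<kappa> = (\<Prod>Q\<in>F. Q ^ \<kappa> Q)" if "{Q. \<kappa> Q \<noteq> 0} \<subseteq> F" for \<kappa>
    unfolding Qpow_def using \<open>finite F\<close> that by (intro prod.mono_neutral_left) auto
  have "Qpow (\<lambda>Q. lam Q + (if Q = R then 1 else 0)) = (\<Prod>Q\<in>F. Q ^ lam Q * (if Q = R then Q else 1))"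
    by (subst Qpow_F) (auto simp: F_def intro!: prod.cong)
  also have "\<dots> = (\<Prod>Q\<in>F. Q ^ lam Q) * R"
    using \<open>finite F\<close> by (simp add: prod.distrib prod.delta F_def)
  also have "(\<Prod>Q\<in>F. Q ^ lam Q) = Qpow lam"
    by (rule Qpow_F[symmetric]) (auto simp: F_def)
  finally show ?thesis .
qed

lemma monomial_expansion_mult:
  assumes val: "is_valuation \<nu>" and "monomial_expansion \<nu> S q d q"
    and "R \<in> S" "R \<noteq> 0" "degree R \<le> d"
  shows "monomial_expansion \<nu> S (q * R) d (q * R)"
proof -
  obtain r :: nat and a lam where 1: "\<forall>i<r. fin_exp S (lam i)" "q = (\<Sum>i<r. smult (a i) (Qpow (lam i)))"
    "\<forall>i<r. val_ge \<nu> (smult (a i) (Qpow (lam i))) q" "\<forall>i<r. \<forall>Q. lam i Q \<noteq> 0 \<longrightarrow> degree Q \<le> d"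
    using assms(2) by (rule monomial_expansionE)
  define lam' where "lam' i = (\<lambda>Q. lam i Q + (if Q = R then 1 else 0))" for i
  have Qpow_lam': "Qpow (lam' i) = Qpow (lam i) * R" if "i < r" for i
    unfolding lam'_def using Qpow_mult 1(1) that by blast
  have "q * R = (\<Sum>i<r. smult (a i) (Qpow (lam' i)))"
    unfolding 1(2) sum_distrib_right by (rule sum.cong) (simp_all add: Qpow_lam')
  moreover have "fin_exp S (lam' i) \<and> val_ge \<nu> (smult (a i) (Qpow (lam' i))) (q * R) \<and>
      (\<forall>Q. lam' i Q \<noteq> 0 \<longrightarrow> degree Q \<le> d)" if "i < r" for i
  proof (intro conjI)
    have "{Q. lam' i Q \<noteq> 0} = insert R {Q. lam i Q \<noteq> 0}" by (auto simp: lam'_def)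
    then show "fin_exp S (lam' i)" using 1(1) that \<open>R \<in> S\<close> by (simp add: fin_exp_def)
    show "val_ge \<nu> (smult (a i) (Qpow (lam' i))) (q * R)"
      using val_ge_mult_right[OF val \<open>R \<noteq> 0\<close> 1(3)[rule_format, OF that]] Qpow_lam'[OF that] by simp
    show "\<forall>Q. lam' i Q \<noteq> 0 \<longrightarrow> degree Q \<le> d"
      using 1(4) that \<open>degree R \<le> d\<close> by (auto simp: lam'_def)
  qed
  ultimately show ?thesis
    unfolding monomial_expansion_def by blast
qed

lemma monomial_expansion_by_division:
  assumes val: "is_valuation \<nu>" and R: "R \<in> S" "key_poly \<nu> R" "degree R \<le> degree f"
    and "f \<noteq> 0" "eps_le \<nu> f R"
    and quotient: "monomial_expansion \<nu> S (f div R) (degree f) (f div R)"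
    and remainder: "monomial_expansion \<nu> S (f mod R) (degree f) (f mod R)"
  shows "monomial_expansion \<nu> S f (degree f) f"
proof -
  note div_mod = key_poly_div_mod_val_ge[OF val R(2) \<open>f \<noteq> 0\<close> \<open>eps_le \<nu> f R\<close>]
  have "R \<noteq> 0" using R(2) by (auto simp: key_poly_def)
  from monomial_expansion_mult[OF val quotient R(1) this R(3)]
  have "monomial_expansion \<nu> S (f div R * R) (degree f) f"
    using div_mod(1) by (rule monomial_expansion_mono) simp
  moreover have "monomial_expansion \<nu> S (f mod R) (degree f) f"
    using remainder div_mod(2) by (rule monomial_expansion_mono) simp
  ultimately show ?thesis
    using monomial_expansion_add by fastforce
qed

lemma GS1_star_if_dominating:
  assumes val: "is_valuation \<nu>" and key: "\<forall>Q\<in>S. key_poly \<nu> Q"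
    and dominating: "\<And>Q. key_poly \<nu> Q \<Longrightarrow> \<exists>R\<in>S. degree R = degree Q \<and> eps_le \<nu> Q R"
  shows "GS1_star \<nu> S"
  unfolding GS1_star_iff_monomial_expansion
proof
  fix f :: "'a poly"
  show "monomial_expansion \<nu> S f (degree f) f"
  proof (induct "degree f" arbitrary: f rule: less_induct)
    case less
    show ?case
    proof (cases "degree f = 0")
      case True
      then show ?thesis by (rule monomial_expansion_const)
    next
      case False
      then have "1 \<le> degree f" "f \<noteq> 0" by auto
      obtain Q where Q: "key_poly \<nu> Q" "degree Q \<le> degree f" "eps_le \<nu> f Q"
        using key_poly_eps_above[OF val \<open>1 \<le> degree f\<close>] by blast
      obtain R where R: "R \<in> S" "degree R = degree Q" "eps_le \<nu> Q R"
        using dominating[OF Q(1)] by blast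
      have "key_poly \<nu> R" using key R(1) by blast
      then have "1 \<le> degree R" "R \<noteq> 0" by (auto simp: key_poly_def)
      have "degree (f div R) < degree f"
        using \<open>1 \<le> degree f\<close> \<open>1 \<le> degree R\<close> by (intro degree_div_less) auto
      moreover have "degree (f mod R) < degree f"
        using degree_mod_less[OF \<open>R \<noteq> 0\<close>, of f] R(2) Q(2) \<open>1 \<le> degree f\<close> by auto
      ultimately show ?thesis
        using R(2) Q(2) eps_le_trans[OF Q(3) R(3)]
        by (intro monomial_expansion_by_division[OF val R(1) \<open>key_poly \<nu> R\<close> _ \<open>f \<noteq> 0\<close>]
            monomial_expansion_mono[OF less.hyps val_ge_refl]) simp_all
    qed
  qed
qed

section \<open>A well-ordered set of key polynomials\<close>

definition eps_representatives :: "('a::field poly \<Rightarrow> 'g::linordered_ab_group_add) \<Rightarrow> 'a poly rel \<Rightarrow> 'a poly set" where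
  "eps_representatives \<nu> W = {R. key_poly \<nu> R \<and>
     (\<forall>R'. key_poly \<nu> R' \<and> degree R' = degree R \<and> (R', R) \<in> W \<longrightarrow> eps_lt \<nu> R' R)}"

lemma exists_strict_well_order: "\<exists>W :: 'a rel. wf W \<and> (\<forall>x y. x \<noteq> y \<longrightarrow> (x, y) \<in> W \<or> (y, x) \<in> W)"
proof -
  obtain W :: "'a rel" where "Well_order W" "Field W = UNIV"
    using well_ordering[where 'a = 'a] by blast
  then have "wf (W - Id)" and total: "total_on UNIV W"
    unfolding well_order_on_def linear_order_on_def by auto
  have "(x, y) \<in> W - Id \<or> (y, x) \<in> W - Id" if "x \<noteq> y" for x y
    using total that unfolding total_on_def by simp
  with \<open>wf (W - Id)\<close> show ?thesis by blast
qed

context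
  fixes W :: "'a::field poly rel"
  assumes wf: "wf W" and total: "\<And>x y. x \<noteq> y \<Longrightarrow> (x, y) \<in> W \<or> (y, x) \<in> W"
begin

lemma eps_representatives_key: "Q \<in> eps_representatives \<nu> W \<Longrightarrow> key_poly \<nu> Q"
  by (simp add: eps_representatives_def)

lemma eps_representatives_in_W_if_eps_lt:
  assumes "Q \<in> eps_representatives \<nu> W" "Q' \<in> eps_representatives \<nu> W"
    and "degree Q = degree Q'" "eps_lt \<nu> Q Q'"
  shows "(Q, Q') \<in> W"
proof -
  have "\<not> eps_lt \<nu> Q' Q" "Q \<noteq> Q'"
    using \<open>eps_lt \<nu> Q Q'\<close> eps_le_refl by (auto simp: eps_lt_def)
  with assms(1,2,3) have "(Q', Q) \<notin> W"
    by (auto simp: eps_representatives_def)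
  with total[OF \<open>Q \<noteq> Q'\<close>] show ?thesis by blast
qed

lemma eps_representatives_eps_inj:
  assumes "Q \<in> eps_representatives \<nu> W" "Q' \<in> eps_representatives \<nu> W"
    and "eps_le \<nu> Q Q'" "eps_le \<nu> Q' Q"
  shows "Q = Q'"
proof (rule ccontr)
  assume "Q \<noteq> Q'"
  have "key_poly \<nu> Q" "key_poly \<nu> Q'"
    using assms(1,2) by (simp_all add: eps_representatives_key)
  with assms(3,4) have "degree Q = degree Q'"
    by (simp add: key_poly_degree_mono le_antisym)
  with total[OF \<open>Q \<noteq> Q'\<close>] assms have "eps_lt \<nu> Q Q' \<or> eps_lt \<nu> Q' Q"
    by (auto simp: eps_representatives_def)
  with assms(3,4) show False by (auto simp: eps_lt_def)
qed

lemma wf_eps_lt_representatives: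
  "wf {(Q, Q'). Q \<in> eps_representatives \<nu> W \<and> Q' \<in> eps_representatives \<nu> W \<and> eps_lt \<nu> Q Q'}"
proof (rule wf_subset[OF wf_inv_image[OF wf_lex_prod[OF wf_less_than wf]]])
  show "{(Q, Q'). Q \<in> eps_representatives \<nu> W \<and> Q' \<in> eps_representatives \<nu> W \<and> eps_lt \<nu> Q Q'}
      \<subseteq> inv_image (less_than <*lex*> W) (\<lambda>Q. (degree Q, Q))"
  proof (rule subrelI)
    fix Q Q'
    assume "(Q, Q') \<in> {(Q, Q'). Q \<in> eps_representatives \<nu> W \<and> Q' \<in> eps_representatives \<nu> W \<and> eps_lt \<nu> Q Q'}"
    then have Q: "Q \<in> eps_representatives \<nu> W" "Q' \<in> eps_representatives \<nu> W"
      and "eps_lt \<nu> Q Q'" by simp_all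
    then have "degree Q \<le> degree Q'"
      using key_poly_degree_mono[OF eps_representatives_key[OF Q(1)] eps_representatives_key[OF Q(2)]]
      by (simp add: eps_lt_def)
    moreover have "(Q, Q') \<in> W" if "degree Q = degree Q'"
      using eps_representatives_in_W_if_eps_lt[OF Q that \<open>eps_lt \<nu> Q Q'\<close>] .
    ultimately show "(Q, Q') \<in> inv_image (less_than <*lex*> W) (\<lambda>Q. (degree Q, Q))"
      by (cases "degree Q = degree Q'") simp_all
  qed
qed

lemma eps_representatives_dominating:
  assumes "key_poly \<nu> Q"
  shows "\<exists>R\<in>eps_representatives \<nu> W. degree R = degree Q \<and> eps_le \<nu> Q R"
proof -
  define T where "T = {R. key_poly \<nu> R \<and> degree R = degree Q \<and> eps_le \<nu> Q R}"
  have "Q \<in> T" using assms eps_le_refl by (simp add: T_def)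
  then obtain R where R: "R \<in> T" and least: "\<forall>R'. (R', R) \<in> W \<longrightarrow> R' \<notin> T"
    using wf_eq_minimal[THEN iffD1, OF wf] by blast
  from R have "key_poly \<nu> R" "degree R = degree Q" "eps_le \<nu> Q R"
    by (simp_all add: T_def)
  have "eps_lt \<nu> R' R" if "key_poly \<nu> R'" "degree R' = degree R" "(R', R) \<in> W" for R'
  proof -
    have "\<not> eps_le \<nu> Q R'"
      using least \<open>(R', R) \<in> W\<close> that \<open>degree R = degree Q\<close> by (simp add: T_def)
    then have "eps_le \<nu> R' Q" using eps_le_total by blast
    then have "eps_le \<nu> R' R" using \<open>eps_le \<nu> Q R\<close> by (rule eps_le_trans)
    moreover have "\<not> eps_le \<nu> R R'"
      using eps_le_trans[OF \<open>eps_le \<nu> Q R\<close>] \<open>\<not> eps_le \<nu> Q R'\<close> by blast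
    ultimately show ?thesis by (simp add: eps_lt_def)
  qed
  with \<open>key_poly \<nu> R\<close> have "R \<in> eps_representatives \<nu> W"
    by (simp add: eps_representatives_def)
  with R show ?thesis by (auto simp: T_def)
qed

end

theorem corollary5p4:
  fixes \<nu> :: "'a::field poly \<Rightarrow> 'g::linordered_ab_group_add"
  assumes "is_valuation \<nu>"
  shows "\<exists>Qs. (\<forall>Q\<in>Qs. key_poly \<nu> Q) \<and> GS1_star \<nu> Qs \<and>
           (\<forall>Q\<in>Qs. \<forall>Q'\<in>Qs. Q \<noteq> Q' \<longrightarrow> \<not> (eps_le \<nu> Q Q' \<and> eps_le \<nu> Q' Q)) \<and>
           wf {(Q, Q'). Q \<in> Qs \<and> Q' \<in> Qs \<and> eps_lt \<nu> Q Q'}"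
proof -
  obtain W :: "'a poly rel"
    where W_wf: "wf W" and W_total: "\<forall>x y. x \<noteq> y \<longrightarrow> (x, y) \<in> W \<or> (y, x) \<in> W"
    using exists_strict_well_order by auto
  note W = W_wf W_total[rule_format]
  let ?Qs = "eps_representatives \<nu> W"
  show ?thesis
  proof (rule exI[of _ ?Qs], intro conjI)
    show key: "\<forall>Q\<in>?Qs. key_poly \<nu> Q"
      using eps_representatives_key[OF W] by blast
    show "GS1_star \<nu> ?Qs"
      by (rule GS1_star_if_dominating[OF assms key eps_representatives_dominating[OF W]])
    show "\<forall>Q\<in>?Qs. \<forall>Q'\<in>?Qs. Q \<noteq> Q' \<longrightarrow> \<not> (eps_le \<nu> Q Q' \<and> eps_le \<nu> Q' Q)"
      using eps_representatives_eps_inj[OF W] by auto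
    show "wf {(Q, Q'). Q \<in> ?Qs \<and> Q' \<in> ?Qs \<and> eps_lt \<nu> Q Q'}"
      by (rule wf_eps_lt_representatives[OF W])
  qed
qed

end
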